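(* Consider the status-update system described in the context. For every slot $t$ (whenever the conditioning events involved have positive probability), the belief $\beta(t+1)=(\beta_0(t+1),\dots,\beta_B(t+1))^{\mathrm T}$ about the battery level is obtained from $\beta(t)$, the action $a(t)$ and the new observation $o(t+1)=(r(t+1),\Delta(t+1),\tilde b(t+1))$ as \[ \beta(t+1)=\begin{cases} \boldsymbol{\Lambda}\beta(t), & a(t)=0,\\ \rho^{0}, & a(t)=1,\ \Delta(t+1)>1,\\ \rho^{j}, & a(t)=1,\ \Delta(t+1)=1,\ \tilde b(t+1)=j,\quad j\in\{1,\dots,B\}, \end{cases} \] where $\boldsymbol{\Lambda}\in[0,1]^{(B+1)\times(B+1)}$ is the left stochastic matrix (rows and columns indexed by $0,\dots,B$) with entries $\Lambda_{j,j}=1-\lambda$ and $\Lambda_{j+1,j}=\lambda$ for $j=0,\dots,B-1$, $\Lambda_{B,B}=1$, and all other entries $0$; and the vectors $\rho^j\in[0,1]^{B+1}$ are $\rho^0=\rho^1=(1-\lambda,\lambda,0,\dots,0)^{\mathrm T}$ and, for $j=1,\dots,B$, $\rho^j$ has entry $1-\lambda$ at index $j-1$, entry $\lambda$ at index $j$, and zeros elsewhere (indices $0,\dots,B$).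
   Context: Time is slotted, $t=1,2,\dots$. A sensor has a battery of capacity $B\in\{1,2,\dots\}$ units, with level $b(t)\in\{0,\dots,B\}$ at the beginning of slot $t$. Energy arrivals $e(t)\in\{0,1\}$ are i.i.d. Bernoulli with $\Pr(e(t)=1)=\lambda$; requests $r(t)\in\{0,1\}$ are i.i.d. Bernoulli with $\Pr(r(t)=1)=p$; the two processes are independent of each other and of everything else. At each slot an edge node chooses an action $a(t)\in\{0,1\}$ (command the sensor to send an update or not); the sensor sends an update iff $d(t)=a(t)\mathbf 1_{\{b(t)\ge 1\}}=1$, and $b(t+1)=\min\{b(t)+e(t)-d(t),B\}$. The age of information $\Delta(t)\in\{1,\dots,\Delta^{\max}\}$ (with $\Delta^{\max}\ge 2$ an integer) evolves as $\Delta(t+1)=1$ if $d(t)=1$ and $\Delta(t+1)=\min\{\Delta(t)+1,\Delta^{\max}\}$ if $d(t)=0$. Each received update carries the sensor's battery level at the slot it was sent, so the edge node's partial battery knowledge $\tilde b(t)\in\{1,\dots,B\}$ evolves as $\tilde b(t+1)=b(t)$ if $d(t)=1$ and $\tilde b(t+1)=\tilde b(t)$ if $d(t)=0$. The edge node observes $o(t)=(r(t),\Delta(t),\tilde b(t))$ but not $b(t)$. The complete information state $\phi^{c}(t)$ consists of an initial probability distribution over the states together with $o(1),\dots,o(t),a(1),\dots,a(t-1)$; the action $a(t)$ is a (possibly randomized, with randomization independent of everything else) function of $\phi^c(t)$. The belief is $\beta_j(t)=\Pr(b(t)=j\mid \phi^{c}(t))$, $j=0,\dots,B$. *)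

theory Defs
  imports "HOL-Probability.Probability"
begin

text \<open>System state at the beginning of a slot: (b, Delta, b_tilde, r),
  with the request r encoded as 0/1. Observation o = (r, Delta, b_tilde).\<close>

type_synonym st = "nat \<times> nat \<times> nat \<times> nat"
type_synonym ob = "nat \<times> nat \<times> nat"

definition bat :: "st \<Rightarrow> nat" where "bat s = fst s"

definition obs :: "st \<Rightarrow> ob" where
  "obs s = (case s of (b, D, bt, r) \<Rightarrow> (r, D, bt))"

definition ob_age :: "ob \<Rightarrow> nat" where "ob_age x = fst (snd x)"
definition ob_bt :: "ob \<Rightarrow> nat" where "ob_bt x = snd (snd x)"

definition step :: "nat \<Rightarrow> nat \<Rightarrow> real \<Rightarrow> real \<Rightarrow> st \<Rightarrow> nat \<Rightarrow> st pmf" where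
  "step B Dmax lam p s a =
     bind_pmf (bernoulli_pmf lam) (\<lambda>eb. bind_pmf (bernoulli_pmf p) (\<lambda>rb.
       (case s of (b, D, bt, r) \<Rightarrow>
         (let e = of_bool eb :: nat;
              d = a * (if b \<ge> 1 then 1 else 0)
          in return_pmf (min (b + e - d) B,
                         (if d = 1 then 1 else min (D + 1) Dmax),
                         (if d = 1 then b else bt),
                         of_bool rb)))))"

definition init_state :: "real \<Rightarrow> (nat \<times> nat \<times> nat) pmf \<Rightarrow> st pmf" where
  "init_state p init =
     bind_pmf init (\<lambda>(b, D, bt). bind_pmf (bernoulli_pmf p) (\<lambda>rb. return_pmf (b, D, bt, of_bool rb)))"

text \<open>Joint law of the trajectory: run n is the distribution of
  ([s(1),...,s(n+1)], [a(1),...,a(n)]).  The (randomized) policy pol maps the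
  observation history [o(1),...,o(t)] and past actions [a(1),...,a(t-1)] to a
  distribution of a(t) (the initial distribution is fixed, so it is implicit).\<close>
primrec run :: "nat \<Rightarrow> nat \<Rightarrow> real \<Rightarrow> real \<Rightarrow> (nat \<times> nat \<times> nat) pmf
                 \<Rightarrow> (ob list \<Rightarrow> nat list \<Rightarrow> nat pmf) \<Rightarrow> nat \<Rightarrow> (st list \<times> nat list) pmf" where
  "run B Dmax lam p init pol 0 = map_pmf (\<lambda>s. ([s], [])) (init_state p init)"
| "run B Dmax lam p init pol (Suc n) =
     bind_pmf (run B Dmax lam p init pol n) (\<lambda>(ss, as).
       bind_pmf (pol (map obs ss) as) (\<lambda>a.
         bind_pmf (step B Dmax lam p (last ss) a) (\<lambda>s'.
           return_pmf (ss @ [s'], as @ [a]))))"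

text \<open>Probability of the information state (o(1..t), a(1..t-1)) = (os, as), computed
  in the law of the history up to slot t (i.e. run (t-1)).\<close>
definition hist_prob :: "nat \<Rightarrow> nat \<Rightarrow> real \<Rightarrow> real \<Rightarrow> (nat \<times> nat \<times> nat) pmf
                 \<Rightarrow> (ob list \<Rightarrow> nat list \<Rightarrow> nat pmf) \<Rightarrow> nat \<Rightarrow> ob list \<Rightarrow> nat list \<Rightarrow> real" where
  "hist_prob B Dmax lam p init pol t os as =
     measure_pmf.prob (run B Dmax lam p init pol (t - 1))
       {h. map obs (fst h) = os \<and> snd h = as}"

definition belief :: "nat \<Rightarrow> nat \<Rightarrow> real \<Rightarrow> real \<Rightarrow> (nat \<times> nat \<times> nat) pmf
                 \<Rightarrow> (ob list \<Rightarrow> nat list \<Rightarrow> nat pmf) \<Rightarrow> nat \<Rightarrow> ob list \<Rightarrow> nat list \<Rightarrow> nat \<Rightarrow> real" where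
  "belief B Dmax lam p init pol t os as j =
     measure_pmf.prob (run B Dmax lam p init pol (t - 1))
       {h. map obs (fst h) = os \<and> snd h = as \<and> bat (last (fst h)) = j}
     / hist_prob B Dmax lam p init pol t os as"

definition Lam :: "nat \<Rightarrow> real \<Rightarrow> nat \<Rightarrow> nat \<Rightarrow> real" where
  "Lam B lam i j =
     (if j < B \<and> i = j then 1 - lam
      else if j < B \<and> i = j + 1 then lam
      else if i = B \<and> j = B then 1 else 0)"

definition rho :: "real \<Rightarrow> nat \<Rightarrow> nat \<Rightarrow> real" where
  "rho lam k i =
     (if k = 0 then (if i = 0 then 1 - lam else if i = 1 then lam else 0)
      else (if i = k - 1 then 1 - lam else if i = k then lam else 0))"

end

theory Submission
  imports Defs
begin

(* Let P_t(i) be the joint probability of the information state at slot t and of b(t) = i, so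
   that the belief is P_t normalised.  One slot gives the forward recursion
     P_{t+1}(j) = pol(a | history) * sum_i Pr(o(t+1), b(t+1) = j | b(t) = i, a(t) = a) * P_t(i),
   and every factor independent of i and j (the policy, the request, and for a = 0 the
   age/knowledge indicator) cancels on normalisation.  For a = 0 what remains is the battery
   kernel of min(b + e, B), i.e. Lambda.  For a = 1 the observation o(t+1) reveals b(t):
   Delta(t+1) > 1 means nothing was sent, so b(t) = 0, while Delta(t+1) = 1 means
   b(t) = tilde b(t+1) = k.  The posterior is then the kernel column at b(t) - d(t), which is
   rho^0 resp. rho^k. *)

lemma measure_pmf_prob_bind:
  "measure_pmf.prob (bind_pmf M f) A = (\<integral>x. measure_pmf.prob (f x) A \<partial>measure_pmf M)"
  unfolding measure_pmf_bind
  by (rule measure_pmf.measure_bind[where N="count_space UNIV"])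
     (auto simp: measure_pmf_in_subprob_algebra)

lemma integral_of_bool_eq_mult:
  "(\<integral>x. of_bool (x = y) * f x \<partial>measure_pmf M) = pmf M y * (f y :: real)"
  by (subst integral_measure_pmf_real[of "{y}"]) auto

lemma integral_indicator_mult_comp_nat:
  fixes g :: "'a \<Rightarrow> nat" and f :: "nat \<Rightarrow> real"
  assumes "\<forall>x\<in>set_pmf M. g x \<le> n"
  shows "(\<integral>x. indicator {x. Q x} x * f (g x) \<partial>M) =
    (\<Sum>i\<le>n. f i * measure_pmf.prob M {x. Q x \<and> g x = i})"
proof -
  have "(\<integral>x. indicator {x. Q x} x * f (g x) \<partial>M) =
      (\<integral>x. (\<Sum>i\<le>n. f i * indicator {x. Q x \<and> g x = i} x) \<partial>M)"
    using assms
    by (intro integral_cong_AE)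
       (auto simp: AE_measure_pmf_iff indicator_def if_distrib[where f="\<lambda>y. f _ * y"] sum.If_cases)
  also have "\<dots> = (\<Sum>i\<le>n. f i * measure_pmf.prob M {x. Q x \<and> g x = i})"
    by (subst Bochner_Integration.integral_sum)
       (auto intro!: integrable_real_indicator simp: measure_pmf.emeasure_eq_measure)
  finally show ?thesis .
qed

lemma measure_pmf_prob_split_nat:
  fixes g :: "'a \<Rightarrow> nat"
  assumes "\<forall>x\<in>set_pmf M. g x \<le> n"
  shows "measure_pmf.prob M {x. Q x} = (\<Sum>i\<le>n. measure_pmf.prob M {x. Q x \<and> g x = i})"
  using integral_indicator_mult_comp_nat[OF assms, of Q "\<lambda>_. 1"] by simp

lemma normalize_stochastic_mixture:
  fixes K :: "nat \<Rightarrow> nat \<Rightarrow> real"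
  assumes K: "\<And>i. i \<le> B \<Longrightarrow> (\<Sum>j\<le>B. K i j) = 1"
    and N: "\<And>j. j \<le> B \<Longrightarrow> N j = c * (\<Sum>i\<le>B. K i j * x i)"
    and nonzero: "(\<Sum>j\<le>B. N j) \<noteq> 0" and "j \<le> B"
  shows "N j / (\<Sum>j\<le>B. N j) = (\<Sum>i\<le>B. K i j * (x i / (\<Sum>i\<le>B. x i)))"
proof -
  have "(\<Sum>j\<le>B. N j) = c * (\<Sum>j\<le>B. \<Sum>i\<le>B. K i j * x i)"
    by (simp add: N sum_distrib_left)
  also have "\<dots> = c * (\<Sum>i\<le>B. (\<Sum>j\<le>B. K i j) * x i)"
    by (subst sum.swap) (simp add: sum_distrib_right)
  also have "\<dots> = c * (\<Sum>i\<le>B. x i)"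
    by (simp add: K)
  finally have total: "(\<Sum>j\<le>B. N j) = c * (\<Sum>i\<le>B. x i)" .
  with nonzero have "c \<noteq> 0" by auto
  then show ?thesis
    unfolding total N[OF \<open>j \<le> B\<close>] by (simp add: sum_divide_distrib)
qed

lemma normalize_point_mass:
  fixes v :: "nat \<Rightarrow> real"
  assumes "(\<Sum>j\<le>B. v j) = 1" and "\<And>j. j \<le> B \<Longrightarrow> N j = c * v j"
    and "(\<Sum>j\<le>B. N j) \<noteq> 0" and "j \<le> B"
  shows "N j / (\<Sum>j\<le>B. N j) = v j"
proof -
  have "(\<Sum>j\<le>B. N j) = c"
    using assms(1,2) by (simp flip: sum_distrib_left)
  then show ?thesis
    using assms(2-4) by simp
qed

definition bat_kernel :: "nat \<Rightarrow> real \<Rightarrow> nat \<Rightarrow> nat \<Rightarrow> real" where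
  "bat_kernel B lam b j = lam * of_bool (j = min (b + 1) B) + (1 - lam) * of_bool (j = min b B)"

lemma sum_bat_kernel: "(\<Sum>j\<le>B. bat_kernel B lam b j) = 1"
  by (simp add: bat_kernel_def sum.distrib flip: sum_distrib_left)

lemma Lam_eq_bat_kernel: "i \<le> B \<Longrightarrow> Lam B lam j i = bat_kernel B lam i j"
  by (cases "i < B") (auto simp: Lam_def bat_kernel_def min_def)

(* For k = 0 the truncated k - 1 is 0: this is why rho 0 = rho 1. *)
lemma rho_eq_bat_kernel: "B \<ge> 1 \<Longrightarrow> k \<le> B \<Longrightarrow> rho lam k j = bat_kernel B lam (k - 1) j"
  by (auto simp: rho_def bat_kernel_def min_def)

lemma sum_Lam_column: "i \<le> B \<Longrightarrow> (\<Sum>j\<le>B. Lam B lam j i) = 1"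
  by (simp add: Lam_eq_bat_kernel sum_bat_kernel)

lemma sum_rho: "B \<ge> 1 \<Longrightarrow> k \<le> B \<Longrightarrow> (\<Sum>j\<le>B. rho lam k j) = 1"
  by (simp add: rho_eq_bat_kernel sum_bat_kernel)

lemma pmf_bernoulli_bind_return:
  fixes lam p :: real
  assumes "0 \<le> lam" "lam \<le> 1" "0 \<le> p" "p \<le> 1"
  shows "pmf (bind_pmf (bernoulli_pmf lam) (\<lambda>e. bind_pmf (bernoulli_pmf p) (\<lambda>rb.
            return_pmf (f e, y1, y2, of_bool rb)))) (x0, x1, x2, x3) =
    (lam * of_bool (x0 = f True) + (1 - lam) * of_bool (x0 = f False))
    * of_bool (x1 = y1 \<and> x2 = y2) * (p * of_bool (x3 = 1) + (1 - p) * of_bool (x3 = 0))"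
proof -
  have "pmf (bind_pmf (bernoulli_pmf lam) (\<lambda>e. bind_pmf (bernoulli_pmf p) (\<lambda>rb.
            return_pmf (f e, y1, y2, of_bool rb)))) (x0, x1, x2, x3) =
    (lam * of_bool (f True = x0) + (1 - lam) * of_bool (f False = x0))
    * of_bool (y1 = x1 \<and> y2 = x2) * (p * of_bool (1 = x3) + (1 - p) * of_bool (0 = x3))"
    using assms by (simp add: pmf_bind indicator_def algebra_simps)
  then show ?thesis by (simp only: eq_commute)
qed

lemma pmf_step:
  assumes "0 \<le> lam" "lam \<le> 1" "0 \<le> p" "p \<le> 1" "a \<le> 1"
  shows "pmf (step B Dmax lam p (b, D, bt, r) a) (b', D', bt', r') =
    (if a = 1 \<and> b \<ge> 1 then bat_kernel B lam (b - 1) b' * of_bool (D' = 1 \<and> bt' = b)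
     else bat_kernel B lam b b' * of_bool (D' = min (D + 1) Dmax \<and> bt' = bt))
    * (p * of_bool (r' = 1) + (1 - p) * of_bool (r' = 0))"
proof (cases "a = 1 \<and> b \<ge> 1")
  case True
  then have "a * (if 1 \<le> b then 1 else 0) = 1" "b + 1 - 1 = b - 1 + 1" by auto
  then show ?thesis
    unfolding step_def Let_def prod.case pmf_bernoulli_bind_return[OF assms(1-4)] bat_kernel_def
    by (simp only: True if_True simp_thms of_bool_eq add_0_right)
next
  case False
  then have "a * (if 1 \<le> b then 1 else 0) = 0" using assms(5) by auto
  then show ?thesis
    unfolding step_def Let_def prod.case pmf_bernoulli_bind_return[OF assms(1-4)] bat_kernel_def
    by (simp only: False if_False zero_neq_one simp_thms of_bool_eq add_0_right diff_zero)
qed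

lemma set_pmf_step:
  assumes "Dmax \<ge> 1" and "s' \<in> set_pmf (step B Dmax lam p s a)"
  shows "bat s' \<le> B \<and> 1 \<le> fst (snd s')"
  using assms by (cases s) (auto simp: step_def set_bind_pmf bat_def)

lemma set_pmf_run:
  assumes init: "set_pmf init \<subseteq> {0..B} \<times> {1..Dmax} \<times> {1..B}" and "Dmax \<ge> 1"
    and "h \<in> set_pmf (run B Dmax lam p init pol n)"
  shows "length (fst h) = Suc n \<and> length (snd h) = n
    \<and> (\<forall>s\<in>set (fst h). bat s \<le> B \<and> 1 \<le> fst (snd s))"
  using assms(3)
proof (induction n arbitrary: h)
  case 0
  then show ?case
    using init by (auto simp: init_state_def set_bind_pmf bat_def)
next
  case (Suc n)
  from Suc.prems obtain ss as a s' where h: "h = (ss @ [s'], as @ [a])"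
    and hist: "(ss, as) \<in> set_pmf (run B Dmax lam p init pol n)"
    and s': "s' \<in> set_pmf (step B Dmax lam p (last ss) a)"
    by (auto simp: set_bind_pmf split: prod.splits)
  show ?case
    using Suc.IH[OF hist] set_pmf_step[OF \<open>Dmax \<ge> 1\<close> s'] h by auto
qed

lemma bat_last_run_le:
  assumes "set_pmf init \<subseteq> {0..B} \<times> {1..Dmax} \<times> {1..B}" and "Dmax \<ge> 1"
  shows "\<forall>h\<in>set_pmf (run B Dmax lam p init pol n). bat (last (fst h)) \<le> B"
  using set_pmf_run[OF assms] by (metis last_in_set list.size(3) nat.distinct(1))

lemma ob_age_ge_1_if_hist_prob_nonzero:
  assumes init: "set_pmf init \<subseteq> {0..B} \<times> {1..Dmax} \<times> {1..B}" and "Dmax \<ge> 1"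
    and "hist_prob B Dmax lam p init pol (Suc n) os as \<noteq> 0" and "x \<in> set os"
  shows "1 \<le> ob_age x"
proof -
  obtain h where h: "h \<in> set_pmf (run B Dmax lam p init pol n)" and "map obs (fst h) = os"
    using assms(3) unfolding hist_prob_def measure_pmf_zero_iff by auto
  then obtain s where "s \<in> set (fst h)" and "x = obs s"
    using \<open>x \<in> set os\<close> by auto
  then show ?thesis
    using set_pmf_run[OF init \<open>Dmax \<ge> 1\<close> h] by (auto simp: obs_def ob_age_def split: prod.splits)
qed

(* Indexed by the run length n = t - 1, unlike hist_prob and belief, which take the slot t. *)
definition hist_bat_prob :: "nat \<Rightarrow> nat \<Rightarrow> real \<Rightarrow> real \<Rightarrow> (nat \<times> nat \<times> nat) pmf
    \<Rightarrow> (ob list \<Rightarrow> nat list \<Rightarrow> nat pmf) \<Rightarrow> nat \<Rightarrow> ob list \<Rightarrow> nat list \<Rightarrow> nat \<Rightarrow> real" where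
  "hist_bat_prob B Dmax lam p init pol n os as j =
     measure_pmf.prob (run B Dmax lam p init pol n)
       {h. map obs (fst h) = os \<and> snd h = as \<and> bat (last (fst h)) = j}"

lemma hist_prob_eq_sum_hist_bat_prob:
  assumes "set_pmf init \<subseteq> {0..B} \<times> {1..Dmax} \<times> {1..B}" and "Dmax \<ge> 1"
  shows "hist_prob B Dmax lam p init pol (Suc n) os as =
    (\<Sum>j\<le>B. hist_bat_prob B Dmax lam p init pol n os as j)"
proof -
  from measure_pmf_prob_split_nat[OF bat_last_run_le[OF assms],
      where Q = "\<lambda>h. map obs (fst h) = os \<and> snd h = as"]
  show ?thesis
    unfolding hist_prob_def hist_bat_prob_def by (simp add: conj_assoc)
qed

lemma belief_eq_normalized:
  assumes "set_pmf init \<subseteq> {0..B} \<times> {1..Dmax} \<times> {1..B}" and "Dmax \<ge> 1" and "t \<ge> 1"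
  shows "belief B Dmax lam p init pol t os as j = hist_bat_prob B Dmax lam p init pol (t - 1) os as j
     / (\<Sum>i\<le>B. hist_bat_prob B Dmax lam p init pol (t - 1) os as i)"
  using hist_prob_eq_sum_hist_bat_prob[OF assms(1,2), of lam p pol "t - 1" os as] \<open>t \<ge> 1\<close>
  by (simp add: belief_def hist_bat_prob_def)

definition extend_hist :: "nat \<Rightarrow> nat \<Rightarrow> real \<Rightarrow> real \<Rightarrow> (ob list \<Rightarrow> nat list \<Rightarrow> nat pmf)
    \<Rightarrow> st list \<times> nat list \<Rightarrow> (st list \<times> nat list) pmf" where
  "extend_hist B Dmax lam p pol h = (case h of (ss, as) \<Rightarrow>
     bind_pmf (pol (map obs ss) as) (\<lambda>a.
       bind_pmf (step B Dmax lam p (last ss) a) (\<lambda>s'. return_pmf (ss @ [s'], as @ [a]))))"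

lemma run_Suc_eq_bind_extend_hist:
  "run B Dmax lam p init pol (Suc n) = bind_pmf (run B Dmax lam p init pol n) (extend_hist B Dmax lam p pol)"
  unfolding run.simps(2) by (intro bind_pmf_cong) (auto simp: extend_hist_def)

lemma prob_extend_hist:
  assumes "ss \<noteq> []" and last_os: "last os = (r0, D0, bt0)"
  shows "measure_pmf.prob (extend_hist B Dmax lam p pol (ss, bs))
      {h. map obs (fst h) = os @ [(r, D, bt)] \<and> snd h = as @ [a] \<and> bat (last (fst h)) = j}
    = indicator {h. map obs (fst h) = os \<and> snd h = as} (ss, bs)
      * (pmf (pol os as) a * pmf (step B Dmax lam p (bat (last ss), D0, bt0, r0) a) (j, D, bt, r))"
    (is "measure_pmf.prob _ ?A = indicator ?E _ * _")
proof -
  have integrals: "measure_pmf.prob (extend_hist B Dmax lam p pol (ss, bs)) ?A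
      = (\<integral>a'. \<integral>s'. indicator ?A (ss @ [s'], bs @ [a'])
          \<partial>measure_pmf (step B Dmax lam p (last ss) a') \<partial>measure_pmf (pol (map obs ss) bs))"
    by (simp only: extend_hist_def prod.case measure_pmf_prob_bind measure_return_pmf)
  show ?thesis
  proof (cases "(ss, bs) \<in> ?E")
    case True
    then have event: "indicator ?A (ss @ [s'], bs @ [a']) =
        of_bool (a' = a) * (of_bool (s' = (j, D, bt, r)) * 1 :: real)" for a' s'
      by (cases s') (auto simp: obs_def bat_def)
    obtain i where last_ss: "last ss = (i, D0, bt0, r0)"
      using True last_map[OF \<open>ss \<noteq> []\<close>, of obs] last_os
      by (cases "last ss") (auto simp: obs_def)
    have "measure_pmf.prob (extend_hist B Dmax lam p pol (ss, bs)) ?A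
        = pmf (pol (map obs ss) bs) a * pmf (step B Dmax lam p (last ss) a) (j, D, bt, r)"
      unfolding integrals event integral_mult_right_zero integral_of_bool_eq_mult by simp
    then show ?thesis
      using True last_ss by (simp add: bat_def)
  next
    case False
    then have "indicator ?A (ss @ [s'], bs @ [a']) = (0 :: real)" for a' s'
      by (auto simp: indicator_def)
    then show ?thesis
      using False by (simp add: integrals)
  qed
qed

lemma hist_bat_prob_snoc:
  assumes init: "set_pmf init \<subseteq> {0..B} \<times> {1..Dmax} \<times> {1..B}" and "Dmax \<ge> 1"
    and last_os: "last os = (r0, D0, bt0)"
  shows "hist_bat_prob B Dmax lam p init pol (Suc n) (os @ [(r, D, bt)]) (as @ [a]) j =
    pmf (pol os as) a * (\<Sum>i\<le>B. pmf (step B Dmax lam p (i, D0, bt0, r0) a) (j, D, bt, r)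
      * hist_bat_prob B Dmax lam p init pol n os as i)"
proof -
  let ?R = "run B Dmax lam p init pol n"
  define G where
    "G i = pmf (pol os as) a * pmf (step B Dmax lam p (i, D0, bt0, r0) a) (j, D, bt, r)" for i
  have "hist_bat_prob B Dmax lam p init pol (Suc n) (os @ [(r, D, bt)]) (as @ [a]) j
      = (\<integral>h. indicator {h. map obs (fst h) = os \<and> snd h = as} h * G (bat (last (fst h))) \<partial>?R)"
    unfolding hist_bat_prob_def run_Suc_eq_bind_extend_hist measure_pmf_prob_bind
  proof (intro integral_cong_AE)
    have "measure_pmf.prob (extend_hist B Dmax lam p pol (ss, bs))
        {h. map obs (fst h) = os @ [(r, D, bt)] \<and> snd h = as @ [a] \<and> bat (last (fst h)) = j}
      = indicator {h. map obs (fst h) = os \<and> snd h = as} (ss, bs) * G (bat (last ss))"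
      if "(ss, bs) \<in> set_pmf ?R" for ss bs
    proof -
      have "ss \<noteq> []" using set_pmf_run[OF init \<open>Dmax \<ge> 1\<close> that] by auto
      then show ?thesis by (simp add: prob_extend_hist[OF _ last_os] G_def)
    qed
    then show "AE h in ?R. measure_pmf.prob (extend_hist B Dmax lam p pol h)
        {h. map obs (fst h) = os @ [(r, D, bt)] \<and> snd h = as @ [a] \<and> bat (last (fst h)) = j}
      = indicator {h. map obs (fst h) = os \<and> snd h = as} h * G (bat (last (fst h)))"
      by (auto simp: AE_measure_pmf_iff)
  qed auto
  also have "\<dots> = (\<Sum>i\<le>B. G i * hist_bat_prob B Dmax lam p init pol n os as i)"
    by (simp add: integral_indicator_mult_comp_nat[OF bat_last_run_le[OF init \<open>Dmax \<ge> 1\<close>]]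
        hist_bat_prob_def conj_assoc)
  finally show ?thesis
    by (simp add: G_def sum_distrib_left mult.assoc)
qed

lemma belief_snoc_idle:
  assumes init: "set_pmf init \<subseteq> {0..B} \<times> {1..Dmax} \<times> {1..B}" and "Dmax \<ge> 1"
    and lam: "0 \<le> lam" "lam \<le> 1" and p: "0 \<le> p" "p \<le> 1"
    and nonzero: "hist_prob B Dmax lam p init pol (Suc (Suc n)) (os @ [(r, D, bt)]) (as @ [0]) \<noteq> 0"
    and "j \<le> B"
  shows "belief B Dmax lam p init pol (Suc (Suc n)) (os @ [(r, D, bt)]) (as @ [0]) j =
    (\<Sum>i\<le>B. Lam B lam j i * belief B Dmax lam p init pol (Suc n) os as i)"
proof -
  obtain r0 D0 bt0 where last_os: "last os = (r0, D0, bt0)"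
    using prod_cases3 by blast
  let ?N = "hist_bat_prob B Dmax lam p init pol (Suc n) (os @ [(r, D, bt)]) (as @ [0])"
  let ?P = "hist_bat_prob B Dmax lam p init pol n os as"
  define c where "c = pmf (pol os as) 0 * of_bool (D = min (D0 + 1) Dmax \<and> bt = bt0)
    * (p * of_bool (r = 1) + (1 - p) * of_bool (r = 0))"
  have "?N j' = c * (\<Sum>i\<le>B. Lam B lam j' i * ?P i)" for j'
    unfolding hist_bat_prob_snoc[OF init \<open>Dmax \<ge> 1\<close> last_os] c_def sum_distrib_left
    by (intro sum.cong) (simp_all add: pmf_step lam p Lam_eq_bat_kernel mult_ac)
  then have "?N j / (\<Sum>j\<le>B. ?N j) = (\<Sum>i\<le>B. Lam B lam j i * (?P i / (\<Sum>i\<le>B. ?P i)))"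
    using nonzero hist_prob_eq_sum_hist_bat_prob[OF init \<open>Dmax \<ge> 1\<close>] \<open>j \<le> B\<close>
    by (intro normalize_stochastic_mixture[OF sum_Lam_column]) auto
  then show ?thesis
    by (simp add: belief_eq_normalized[OF init \<open>Dmax \<ge> 1\<close>])
qed

lemma belief_snoc_undelivered:
  assumes init: "set_pmf init \<subseteq> {0..B} \<times> {1..Dmax} \<times> {1..B}" and "Dmax \<ge> 1" and "B \<ge> 1"
    and lam: "0 \<le> lam" "lam \<le> 1" and p: "0 \<le> p" "p \<le> 1"
    and nonzero: "hist_prob B Dmax lam p init pol (Suc (Suc n)) (os @ [(r, D, bt)]) (as @ [1]) \<noteq> 0"
    and "D > 1" and "j \<le> B"
  shows "belief B Dmax lam p init pol (Suc (Suc n)) (os @ [(r, D, bt)]) (as @ [1]) j = rho lam 0 j"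
proof -
  obtain r0 D0 bt0 where last_os: "last os = (r0, D0, bt0)"
    using prod_cases3 by blast
  let ?N = "hist_bat_prob B Dmax lam p init pol (Suc n) (os @ [(r, D, bt)]) (as @ [1])"
  let ?P = "hist_bat_prob B Dmax lam p init pol n os as"
  define c where "c = pmf (pol os as) 1 * of_bool (D = min (D0 + 1) Dmax \<and> bt = bt0)
    * (p * of_bool (r = 1) + (1 - p) * of_bool (r = 0)) * ?P 0"
  have "?N j' = c * rho lam 0 j'" for j'
  proof -
    \<comment> \<open>a command followed by Delta > 1 means nothing was sent, so the battery was empty\<close>
    have "(\<Sum>i\<le>B. pmf (step B Dmax lam p (i, D0, bt0, r0) 1) (j', D, bt, r) * ?P i) =
        (\<Sum>i\<le>B. if i = 0 then bat_kernel B lam 0 j' * of_bool (D = min (D0 + 1) Dmax \<and> bt = bt0)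
          * (p * of_bool (r = 1) + (1 - p) * of_bool (r = 0)) * ?P 0 else 0)"
      using \<open>D > 1\<close> by (intro sum.cong) (simp_all add: pmf_step lam p)
    then show ?thesis
      unfolding hist_bat_prob_snoc[OF init \<open>Dmax \<ge> 1\<close> last_os] c_def
      using \<open>B \<ge> 1\<close> by (simp add: rho_eq_bat_kernel mult_ac)
  qed
  then have "?N j / (\<Sum>j\<le>B. ?N j) = rho lam 0 j"
    using nonzero hist_prob_eq_sum_hist_bat_prob[OF init \<open>Dmax \<ge> 1\<close>] \<open>j \<le> B\<close>
    by (intro normalize_point_mass[OF sum_rho[OF \<open>B \<ge> 1\<close>]]) auto
  then show ?thesis
    by (simp add: belief_eq_normalized[OF init \<open>Dmax \<ge> 1\<close>])
qed

lemma belief_snoc_delivered: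
  assumes init: "set_pmf init \<subseteq> {0..B} \<times> {1..Dmax} \<times> {1..B}" and "Dmax \<ge> 2"
    and lam: "0 \<le> lam" "lam \<le> 1" and p: "0 \<le> p" "p \<le> 1" and "os \<noteq> []"
    and nonzero: "hist_prob B Dmax lam p init pol (Suc (Suc n)) (os @ [(r, 1, k)]) (as @ [1]) \<noteq> 0"
    and "k \<in> {1..B}" and "j \<le> B"
  shows "belief B Dmax lam p init pol (Suc (Suc n)) (os @ [(r, 1, k)]) (as @ [1]) j = rho lam k j"
proof -
  have "Dmax \<ge> 1" using \<open>Dmax \<ge> 2\<close> by simp
  obtain r0 D0 bt0 where last_os: "last os = (r0, D0, bt0)"
    using prod_cases3 by blast
  have "last os \<in> set (os @ [(r, 1, k)])"
    using \<open>os \<noteq> []\<close> by simp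
  from ob_age_ge_1_if_hist_prob_nonzero[OF init \<open>Dmax \<ge> 1\<close> nonzero this]
  have "1 \<le> D0"
    by (simp add: last_os ob_age_def)
  let ?N = "hist_bat_prob B Dmax lam p init pol (Suc n) (os @ [(r, 1, k)]) (as @ [1])"
  let ?P = "hist_bat_prob B Dmax lam p init pol n os as"
  define c where "c = pmf (pol os as) 1 * (p * of_bool (r = 1) + (1 - p) * of_bool (r = 0)) * ?P k"
  have "?N j' = c * rho lam k j'" for j'
  proof -
    \<comment> \<open>an empty battery would have left Delta = min (D0 + 1) Dmax \<ge> 2, so b(t) = k\<close>
    have "(\<Sum>i\<le>B. pmf (step B Dmax lam p (i, D0, bt0, r0) 1) (j', 1, k, r) * ?P i) =
        (\<Sum>i\<le>B. if i = k then bat_kernel B lam (k - 1) j'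
          * (p * of_bool (r = 1) + (1 - p) * of_bool (r = 0)) * ?P k else 0)"
      using \<open>1 \<le> D0\<close> \<open>Dmax \<ge> 2\<close> \<open>k \<in> {1..B}\<close> by (intro sum.cong) (auto simp: pmf_step lam p)
    then show ?thesis
      unfolding hist_bat_prob_snoc[OF init \<open>Dmax \<ge> 1\<close> last_os] c_def
      using \<open>k \<in> {1..B}\<close> rho_eq_bat_kernel[of B k lam j'] by (simp add: mult_ac)
  qed
  then have "?N j / (\<Sum>j\<le>B. ?N j) = rho lam k j"
    using nonzero hist_prob_eq_sum_hist_bat_prob[OF init \<open>Dmax \<ge> 1\<close>] \<open>j \<le> B\<close> \<open>k \<in> {1..B}\<close>
    by (intro normalize_point_mass[OF sum_rho]) auto
  then show ?thesis
    by (simp add: belief_eq_normalized[OF init \<open>Dmax \<ge> 1\<close>])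
qed

theorem theorem1:
  fixes B Dmax :: nat and lam p :: real
    and init :: "(nat \<times> nat \<times> nat) pmf"
    and pol :: "ob list \<Rightarrow> nat list \<Rightarrow> nat pmf"
    and t :: nat and os :: "ob list" and as :: "nat list"
  assumes "B \<ge> 1" and "Dmax \<ge> 2"
    and "0 \<le> lam" and "lam \<le> 1" and "0 \<le> p" and "p \<le> 1"
    and "set_pmf init \<subseteq> {0..B} \<times> {1..Dmax} \<times> {1..B}"
    and "\<And>os' as'. set_pmf (pol os' as') \<subseteq> {0, 1}"
    and "t \<ge> 1" and "length os = t + 1" and "length as = t"
    and "hist_prob B Dmax lam p init pol (t + 1) os as > 0"
  shows
    "(as ! (t - 1) = 0 \<longrightarrow>
        (\<forall>j \<le> B. belief B Dmax lam p init pol (t + 1) os as j =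
           (\<Sum>i \<le> B. Lam B lam j i * belief B Dmax lam p init pol t (take t os) (take (t - 1) as) i)))
     \<and> (as ! (t - 1) = 1 \<and> ob_age (os ! t) > 1 \<longrightarrow>
        (\<forall>j \<le> B. belief B Dmax lam p init pol (t + 1) os as j = rho lam 0 j))
     \<and> (\<forall>k \<in> {1..B}. as ! (t - 1) = 1 \<and> ob_age (os ! t) = 1 \<and> ob_bt (os ! t) = k \<longrightarrow>
        (\<forall>j \<le> B. belief B Dmax lam p init pol (t + 1) os as j = rho lam k j))"
proof -
  have "Dmax \<ge> 1" using \<open>Dmax \<ge> 2\<close> by simp
  obtain n where t: "t = Suc n" using \<open>t \<ge> 1\<close> by (cases t) auto
  obtain r D bt where last_ob: "os ! t = (r, D, bt)" using prod_cases3 by blast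
  define os0 a as0 where "os0 = take t os" and "a = as ! (t - 1)" and "as0 = take (t - 1) as"
  have os: "os = os0 @ [(r, D, bt)]"
    using \<open>length os = t + 1\<close> last_ob take_Suc_conv_app_nth[of t os] by (simp add: os0_def)
  have as: "as = as0 @ [a]"
    using \<open>length as = t\<close> take_Suc_conv_app_nth[of n as] by (simp add: t as0_def a_def)
  have "os0 \<noteq> []" using t \<open>length os = t + 1\<close> by (auto simp: os0_def)
  have nonzero: "hist_prob B Dmax lam p init pol (Suc (Suc n)) (os0 @ [(r, D, bt)]) (as0 @ [a]) \<noteq> 0"
    using assms(12) by (simp flip: os as add: t)
  show ?thesis
    unfolding os0_def[symmetric] as0_def[symmetric] a_def[symmetric] last_ob
    unfolding os as t Suc_eq_plus1[symmetric] diff_Suc_1 ob_age_def ob_bt_def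
    using belief_snoc_idle[OF assms(7) \<open>Dmax \<ge> 1\<close> assms(3-6)]
      belief_snoc_undelivered[OF assms(7) \<open>Dmax \<ge> 1\<close> \<open>B \<ge> 1\<close> assms(3-6)]
      belief_snoc_delivered[OF assms(7) \<open>Dmax \<ge> 2\<close> assms(3-6) \<open>os0 \<noteq> []\<close>] nonzero
    by auto
qed

end
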